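(* Let $h_{s,r}$ be a Hermitian operator on $\mathcal H_s\otimes\mathcal H_r\cong\mathbb C^2\otimes\mathbb C^2$ (qubits $s$ and $r$) which is not $(s,\eta)$-gapped. Then there exists a Hermitian operator $\hat h_r$ acting nontrivially only on qubit $r$ (i.e. of the form $I_s\otimes g_r$) such that $\|h_{s,r}-\hat h_r\|\le 4\eta$.
   Context: Pauli matrices: $\sigma^{(0)}=I$, $\sigma^{(1)}=X=\begin{pmatrix}0&1\\1&0\end{pmatrix}$, $\sigma^{(2)}=Y=\begin{pmatrix}0&-i\\i&0\end{pmatrix}$, $\sigma^{(3)}=Z=\begin{pmatrix}1&0\\0&-1\end{pmatrix}$. Every operator on two qubits $s,r$ has a unique local Pauli decomposition $h_{s,r}=\sum_{\alpha=0}^3 A_s^{(\alpha)}\otimes\sigma_r^{(\alpha)}$ with $A_s^{(\alpha)}\in\mathbb C^{2\times2}$ (Hermitian when $h_{s,r}$ is). For Hermitian $A\in\mathbb C^{2\times2}$, $\Delta(A)=\lambda_{\max}(A)-\lambda_{\min}(A)$ is its spectral gap. A Hermitian $h_{s,r}$ is $(s,\eta)$-gapped if some $A_s^{(\alpha)}$ in this decomposition satisfies $\Delta(A_s^{(\alpha)})\ge\eta$. $\|\cdot\|$ is the operator norm. *)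

theory Defs
  imports "HOL-Analysis.Analysis"
begin

text \<open>Two-qubit operators on H_s (x) H_r: matrices indexed by 2 \<times> 2, where the first
  component of the index is qubit s and the second is qubit r.\<close>

type_synonym qop = "complex^2^2"
type_synonym qqop = "complex^(2 \<times> 2)^(2 \<times> 2)"

definition mat2 :: "complex \<Rightarrow> complex \<Rightarrow> complex \<Rightarrow> complex \<Rightarrow> qop" where
  "mat2 a b c d = (\<chi> i j. if i = 0 then (if j = 0 then a else b) else (if j = 0 then c else d))"

definition pauli :: "nat \<Rightarrow> qop" where
  "pauli k = (if k = 0 then mat2 1 0 0 1
              else if k = 1 then mat2 0 1 1 0
              else if k = 2 then mat2 0 (- \<i>) \<i> 0
              else mat2 1 0 0 (-1))"

definition kron :: "complex^'a^'b \<Rightarrow> complex^'c^'d \<Rightarrow> complex^('a \<times> 'c)^('b \<times> 'd)" where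
  "kron A B = (\<chi> p q. A $ fst p $ fst q * B $ snd p $ snd q)"

definition hermitian :: "complex^'n^'n \<Rightarrow> bool" where
  "hermitian A \<longleftrightarrow> (\<forall>i j. A $ i $ j = cnj (A $ j $ i))"

text \<open>Real eigenvalues (for Hermitian matrices these are all eigenvalues).\<close>
definition real_eigenvalues :: "complex^'n^'n \<Rightarrow> real set" where
  "real_eigenvalues A = {l. \<exists>v. v \<noteq> 0 \<and> A *v v = complex_of_real l *s v}"

definition spectral_gap :: "complex^'n^'n \<Rightarrow> real" where
  "spectral_gap A = Max (real_eigenvalues A) - Min (real_eigenvalues A)"

text \<open>h is (s,eta)-gapped: in the (unique) local Pauli decomposition
  h = sum_alpha A^(alpha)_s (x) sigma^(alpha)_r some A^(alpha) has gap \<ge> eta.\<close>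
definition gapped :: "qqop \<Rightarrow> real \<Rightarrow> bool" where
  "gapped h \<eta> \<longleftrightarrow> (\<exists>A :: nat \<Rightarrow> qop.
      h = (\<Sum>\<alpha><4. kron (A \<alpha>) (pauli \<alpha>)) \<and> (\<exists>\<alpha><4. spectral_gap (A \<alpha>) \<ge> \<eta>))"

definition opnorm :: "complex^'n^'m \<Rightarrow> real" where
  "opnorm M = onorm (\<lambda>x. M *v x)"

end

theory Submission
  imports Defs
begin

text \<open>Write \<open>h = \<Sum>\<^sub>\<alpha> A\<^sub>\<alpha> \<otimes> \<sigma>\<^sub>\<alpha>\<close>. Since \<open>h\<close> is not gapped, every Hermitian coefficient
  \<open>A\<^sub>\<alpha> = [[a, b], [cnj b, d]]\<close> has spectral gap \<open>sqrt ((a - d)\<^sup>2 + 4 \<bar>b\<bar>\<^sup>2) < \<eta>\<close>, so all entries of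
  \<open>A\<^sub>\<alpha> - (tr A\<^sub>\<alpha> / 2) I\<close> have modulus at most \<open>\<eta>/2\<close>. Taking \<open>g = \<Sum>\<^sub>\<alpha> (tr A\<^sub>\<alpha> / 2) \<sigma>\<^sub>\<alpha>\<close>,
  the residual \<open>h - I \<otimes> g = \<Sum>\<^sub>\<alpha> (A\<^sub>\<alpha> - (tr A\<^sub>\<alpha> / 2) I) \<otimes> \<sigma>\<^sub>\<alpha>\<close> has entries of modulus at
  most \<open>\<eta>\<close>, because each entry position meets exactly two nonzero Pauli entries, both of
  modulus one. A \<open>4 \<times> 4\<close> matrix with entries bounded by \<open>\<eta>\<close> has operator norm at most \<open>4\<eta>\<close>.\<close>

lemma exhaust_2_01: "(i::2) = 0 \<or> i = 1"
  using exhaust_2[of i] by auto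

lemma forall_2_01: "(\<forall>i::2. P i) \<longleftrightarrow> P 0 \<and> P 1"
  by (metis exhaust_2_01)

lemma UNIV_2_01: "(UNIV::2 set) = {0, 1}"
  using exhaust_2_01 by auto

lemma sum_UNIV_2_01: "(\<Sum>i\<in>UNIV. f i) = f (0::2) + f 1"
  by (simp add: UNIV_2_01)

lemma matrix_vector_mult_2_component:
  "((M::'a::semiring_1^2^2) *v v) $ i = M$i$0 * v$0 + M$i$1 * v$1"
  by (simp add: matrix_vector_mult_def sum_UNIV_2_01)

lemma hermitian_entry_swap: "hermitian M \<Longrightarrow> M$j$i = cnj (M$i$j)"
  unfolding hermitian_def by blast

lemma hermitian_diag_real: "hermitian M \<Longrightarrow> M$i$i = complex_of_real (Re (M$i$i))"
  using hermitian_entry_swap[of M i i] by (simp add: complex_eq_iff)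

lemma hermitian_sum:
  assumes "\<And>x. x \<in> S \<Longrightarrow> hermitian (f x)"
  shows "hermitian (\<Sum>x\<in>S. f x)"
proof (unfold hermitian_def, intro allI)
  fix i j
  have "(\<Sum>x\<in>S. f x $ i $ j) = (\<Sum>x\<in>S. cnj (f x $ j $ i))"
    by (rule sum.cong[OF refl hermitian_entry_swap[OF assms]])
  then show "(\<Sum>x\<in>S. f x) $ i $ j = cnj ((\<Sum>x\<in>S. f x) $ j $ i)"
    by (simp add: sum_component cnj_sum)
qed

lemma hermitian_scaleR:
  assumes "hermitian A"
  shows "hermitian (r *\<^sub>R A)"
proof (unfold hermitian_def, intro allI)
  fix i j
  show "(r *\<^sub>R A) $ i $ j = cnj ((r *\<^sub>R A) $ j $ i)"
    using hermitian_entry_swap[OF assms, of j i] by simp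
qed

lemma kron_diff_left: "kron (A - B) C = kron A C - kron B C"
  by (simp add: kron_def vec_eq_iff algebra_simps)

lemma kron_sum_right: "kron A (\<Sum>x\<in>S. f x) = (\<Sum>x\<in>S. kron A (f x))"
  by (simp add: kron_def vec_eq_iff sum_component sum_distrib_left)

lemma kron_identity_scaleR: "kron (mat 1) (r *\<^sub>R B) = kron (mat (complex_of_real r)) B"
  by (simp add: kron_def vec_eq_iff mat_def scaleR_conv_of_real[where 'a = complex])

lemma opnorm_le_entry_bound:
  fixes M :: "complex^'n^'m"
  assumes entry_le: "\<And>i j. cmod (M$i$j) \<le> e"
  shows "opnorm M \<le> e * sqrt (real (CARD('m) * CARD('n)))"
  unfolding opnorm_def
proof (rule onorm_le)
  fix x :: "complex^'n"
  have e_nonneg: "0 \<le> e"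
    using entry_le norm_ge_zero order_trans by blast
  define S where "S = (\<Sum>j\<in>UNIV. cmod (x$j))"
  have norm_sq: "(norm y)^2 = (\<Sum>i\<in>UNIV. (cmod (y$i))^2)" for y :: "complex^'k"
    unfolding norm_vec_def L2_set_def by (simp add: sum_nonneg)
  have S_sq: "S^2 \<le> real CARD('n) * (norm x)^2"
    using Cauchy_Schwarz_ineq_sum[of "\<lambda>_. 1" "\<lambda>j. cmod (x$j)" UNIV]
    unfolding S_def norm_sq by simp
  have row_le: "cmod ((M *v x)$i) \<le> e * S" for i
  proof -
    have "cmod ((M *v x)$i) \<le> (\<Sum>j\<in>UNIV. cmod (M$i$j) * cmod (x$j))"
      unfolding matrix_vector_mult_def vec_lambda_beta by (rule norm_sum[THEN order_trans]) (simp add: norm_mult)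
    also have "\<dots> \<le> (\<Sum>j\<in>UNIV. e * cmod (x$j))"
      by (intro sum_mono mult_right_mono entry_le) simp
    finally show ?thesis
      unfolding S_def sum_distrib_left .
  qed
  have "(norm (M *v x))^2 \<le> (\<Sum>i\<in>(UNIV::'m set). (e * S)^2)"
    unfolding norm_sq by (intro sum_mono power_mono row_le) simp
  also have "\<dots> = real CARD('m) * e^2 * S^2"
    by (simp add: power_mult_distrib)
  also have "\<dots> \<le> real CARD('m) * e^2 * (real CARD('n) * (norm x)^2)"
    by (intro mult_left_mono S_sq) simp
  also have "\<dots> = (e * sqrt (real (CARD('m) * CARD('n))) * norm x)^2"
    by (simp add: power_mult_distrib)
  finally show "norm (M *v x) \<le> e * sqrt (real (CARD('m) * CARD('n))) * norm x"
    by (rule power2_le_imp_le) (simp add: e_nonneg)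
qed

lemma real_eigenvalue_hermitian_2_imp_char_eq:
  fixes M :: qop
  assumes M: "hermitian M" and l: "l \<in> real_eigenvalues M"
  shows "(l - Re (M$0$0)) * (l - Re (M$1$1)) = (cmod (M$0$1))^2"
proof -
  define p q b where "p = Re (M$0$0)" and "q = Re (M$1$1)" and "b = M$0$1"
  obtain v where v: "v \<noteq> 0" "M *v v = complex_of_real l *s v"
    using l unfolding real_eigenvalues_def by auto
  have M_entries: "M$0$0 = p" "M$1$1 = q" "M$0$1 = b" "M$1$0 = cnj b"
    unfolding p_def q_def b_def by (rule hermitian_diag_real[OF M] hermitian_entry_swap[OF M] refl)+
  have eq0: "(p - l) * v$0 + b * v$1 = 0" and eq1: "cnj b * v$0 + (q - l) * v$1 = 0"
    using v(2) M_entries unfolding vec_eq_iff forall_2_01 matrix_vector_mult_2_component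
    by (simp_all add: algebra_simps)
  define d where "d = complex_of_real ((p - l) * (q - l) - (cmod b)^2)"
  have b_cnj_b: "b * cnj b = complex_of_real ((cmod b)^2)"
    by (rule complex_norm_square[symmetric])
  \<comment> \<open>Multiplying the eigen-equations by the adjugate of \<open>M - l I\<close> shows that its
    determinant \<open>d\<close> annihilates both components of \<open>v\<close>.\<close>
  have "d * v$0 = (q - l) * ((p - l) * v$0 + b * v$1) - b * (cnj b * v$0 + (q - l) * v$1)"
    and "d * v$1 = (p - l) * (cnj b * v$0 + (q - l) * v$1) - cnj b * ((p - l) * v$0 + b * v$1)"
    unfolding d_def of_real_diff of_real_mult b_cnj_b[symmetric] by (simp_all add: algebra_simps)
  then have "d * v$0 = 0" "d * v$1 = 0"
    using eq0 eq1 by simp_all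
  moreover have "v$0 \<noteq> 0 \<or> v$1 \<noteq> 0"
    using v(1) unfolding vec_eq_iff forall_2_01 by simp
  ultimately have "d = 0" by auto
  then show ?thesis
    unfolding d_def of_real_eq_0_iff p_def q_def b_def by (simp add: algebra_simps)
qed

lemma char_eq_imp_real_eigenvalue_hermitian_2:
  fixes M :: qop
  assumes M: "hermitian M" and l: "(l - Re (M$0$0)) * (l - Re (M$1$1)) = (cmod (M$0$1))^2"
  shows "l \<in> real_eigenvalues M"
proof -
  define p q b where "p = Re (M$0$0)" and "q = Re (M$1$1)" and "b = M$0$1"
  have M_entries: "M$0$0 = p" "M$1$1 = q" "M$0$1 = b" "M$1$0 = cnj b"
    unfolding p_def q_def b_def by (rule hermitian_diag_real[OF M] hermitian_entry_swap[OF M] refl)+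
  have char_eq: "cnj b * b + q * (l - p) = l * (l - p)"
  proof -
    have "cnj b * b = complex_of_real ((cmod b)^2)"
      by (metis complex_norm_square mult.commute)
    then show ?thesis
      using arg_cong[OF l, of complex_of_real] unfolding p_def[symmetric] q_def[symmetric] b_def[symmetric]
      by (simp add: algebra_simps)
  qed
  \<comment> \<open>The eigenvector is (b, l - p), unless that vector vanishes.\<close>
  define v :: "complex^2" where
    "v = (if b = 0 \<and> l = p then (\<chi> i. if i = 0 then 1 else 0) else (\<chi> i. if i = 0 then b else l - p))"
  have "v \<noteq> 0"
    unfolding v_def vec_eq_iff forall_2_01 by auto
  moreover have "M *v v = complex_of_real l *s v"
  proof (cases "b = 0 \<and> l = p")
    case True
    then show ?thesis
      unfolding v_def vec_eq_iff forall_2_01 matrix_vector_mult_2_component using M_entries by simp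
  next
    case False
    then show ?thesis
      unfolding v_def vec_eq_iff forall_2_01 matrix_vector_mult_2_component using M_entries char_eq
      by (simp add: algebra_simps)
  qed
  ultimately show ?thesis
    unfolding real_eigenvalues_def by blast
qed

lemma real_eigenvalues_hermitian_2:
  fixes M :: qop
  assumes M: "hermitian M"
  defines "m \<equiv> (Re (M$0$0) + Re (M$1$1)) / 2"
    and "r \<equiv> sqrt ((Re (M$0$0) - Re (M$1$1))^2 + 4 * (cmod (M$0$1))^2) / 2"
  shows "real_eigenvalues M = {m + r, m - r}"
proof -
  have r_nonneg: "r \<ge> 0" and r_sq: "r^2 = ((Re (M$0$0) - Re (M$1$1))^2 + 4 * (cmod (M$0$1))^2) / 4"
    unfolding r_def by (simp_all add: power_divide)
  have "(l - Re (M$0$0)) * (l - Re (M$1$1)) = (cmod (M$0$1))^2 \<longleftrightarrow> (l - m)^2 = r^2" for l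
  proof -
    have "(l - m)^2 - r^2 = (l - Re (M$0$0)) * (l - Re (M$1$1)) - (cmod (M$0$1))^2"
      unfolding r_sq m_def by (simp add: power2_eq_square field_simps)
    then show ?thesis by (metis eq_iff_diff_eq_0)
  qed
  also have "(l - m)^2 = r^2 \<longleftrightarrow> l = m + r \<or> l = m - r" for l
    using r_nonneg by (auto simp: power2_eq_iff)
  finally show ?thesis
    using real_eigenvalue_hermitian_2_imp_char_eq[OF M] char_eq_imp_real_eigenvalue_hermitian_2[OF M] by blast
qed

lemma spectral_gap_hermitian_2:
  fixes M :: qop
  assumes "hermitian M"
  shows "spectral_gap M = sqrt ((Re (M$0$0) - Re (M$1$1))^2 + 4 * (cmod (M$0$1))^2)"
proof -
  have discr_nonneg: "0 \<le> (Re (M$0$0) - Re (M$1$1))^2 + 4 * (cmod (M$0$1))^2"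
    by simp
  show ?thesis
    unfolding spectral_gap_def real_eigenvalues_hermitian_2[OF assms]
    by (simp add: max_def min_def) (use discr_nonneg in linarith)
qed

lemma norm_entry_sub_half_trace_le_half_gap:
  fixes M :: qop
  assumes M: "hermitian M"
  shows "cmod ((M - mat (complex_of_real (Re (trace M) / 2))) $ i $ j) \<le> spectral_gap M / 2"
proof -
  define p q b where "p = Re (M$0$0)" and "q = Re (M$1$1)" and "b = M$0$1"
  have M_entries: "M$0$0 = p" "M$1$1 = q" "M$0$1 = b" "M$1$0 = cnj b"
    unfolding p_def q_def b_def by (rule hermitian_diag_real[OF M] hermitian_entry_swap[OF M] refl)+
  have gap: "spectral_gap M = sqrt ((p - q)^2 + 4 * (cmod b)^2)"
    unfolding p_def q_def b_def by (rule spectral_gap_hermitian_2[OF M])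
  have diag_le: "\<bar>p - q\<bar> / 2 \<le> spectral_gap M / 2"
    unfolding gap by (simp add: real_le_rsqrt)
  have off_diag_le: "cmod b \<le> spectral_gap M / 2"
  proof -
    have "2 * cmod b = sqrt (4 * (cmod b)^2)"
      by (simp add: real_sqrt_mult)
    also have "\<dots> \<le> spectral_gap M"
      unfolding gap by simp
    finally show ?thesis by simp
  qed
  have half_trace: "Re (trace M) / 2 = (p + q) / 2"
    unfolding trace_def sum_UNIV_2_01 p_def q_def by simp
  define N where "N = M - mat (complex_of_real (Re (trace M) / 2))"
  have "N$0$0 = complex_of_real ((p - q) / 2)" "N$1$1 = complex_of_real ((q - p) / 2)"
    "N$0$1 = b" "N$1$0 = cnj b"
    unfolding N_def half_trace by (simp_all add: mat_def M_entries field_simps flip: of_real_diff)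
  then have "cmod (N$0$0) = \<bar>p - q\<bar> / 2" "cmod (N$1$1) = \<bar>p - q\<bar> / 2"
    "cmod (N$0$1) = cmod b" "cmod (N$1$0) = cmod b"
    by (simp_all only: norm_of_real complex_mod_cnj abs_divide abs_minus_commute)
  then have "cmod (N$i$j) \<in> {\<bar>p - q\<bar> / 2, cmod b}"
    using exhaust_2_01[of i] exhaust_2_01[of j] by auto
  then show ?thesis
    unfolding N_def[symmetric] using diag_le off_diag_le by auto
qed

lemma pauli_hermitian: "hermitian (pauli k)"
  unfolding hermitian_def forall_2_01 by (simp add: pauli_def mat2_def)

lemma sum_norm_pauli_entry: "(\<Sum>\<beta><4. cmod (pauli \<beta> $ r $ s)) = 2"
  using exhaust_2_01[of r] exhaust_2_01[of s] by (auto simp: eval_nat_numeral pauli_def mat2_def)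

text \<open>\<open>pauli_coeff h \<beta> = tr\<^sub>r ((I \<otimes> \<sigma>\<^sub>\<beta>) h) / 2\<close>, the coefficient singled out by the orthogonality
  relation \<open>tr (\<sigma>\<^sub>\<alpha> \<sigma>\<^sub>\<beta>) = 2 \<delta>\<^sub>\<alpha>\<^sub>\<beta>\<close> of the Pauli matrices.\<close>

definition pauli_coeff :: "qqop \<Rightarrow> nat \<Rightarrow> qop" where
  "pauli_coeff h \<beta> = (\<chi> i j. (\<Sum>r\<in>UNIV. \<Sum>s\<in>UNIV. h$(i,r)$(j,s) * cnj (pauli \<beta> $ r $ s)) / 2)"

lemma pauli_decomposition: "h = (\<Sum>\<alpha><4. kron (pauli_coeff h \<alpha>) (pauli \<alpha>))"
proof -
  have "h$(i,r)$(j,s) = (\<Sum>\<alpha><4. pauli_coeff h \<alpha> $ i $ j * pauli \<alpha> $ r $ s)" for i j r s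
    using exhaust_2_01[of r] exhaust_2_01[of s]
    by (auto simp: pauli_coeff_def sum_UNIV_2_01 eval_nat_numeral pauli_def mat2_def field_simps)
  then show ?thesis
    by (simp add: vec_eq_iff sum_component kron_def)
qed

lemma hermitian_pauli_coeff:
  assumes "hermitian h"
  shows "hermitian (pauli_coeff h \<beta>)"
proof (unfold hermitian_def, intro allI)
  fix i j
  have swap: "cnj (h$(j,r)$(i,s)) * pauli \<beta> $ r $ s = h$(i,s)$(j,r) * cnj (pauli \<beta> $ s $ r)" for r s
    using hermitian_entry_swap[OF assms, of "(i,s)" "(j,r)"] hermitian_entry_swap[OF pauli_hermitian, of \<beta> s r]
    by simp
  have "cnj (pauli_coeff h \<beta> $ j $ i) = (\<Sum>r\<in>UNIV. \<Sum>s\<in>UNIV. h$(i,s)$(j,r) * cnj (pauli \<beta> $ s $ r)) / 2"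
    by (simp add: pauli_coeff_def cnj_sum swap)
  also have "\<dots> = pauli_coeff h \<beta> $ i $ j"
    unfolding pauli_coeff_def vec_lambda_beta by (subst sum.swap) (rule refl)
  finally show "pauli_coeff h \<beta> $ i $ j = cnj (pauli_coeff h \<beta> $ j $ i)"
    by simp
qed

lemma spectral_gap_pauli_coeff_less:
  assumes "\<not> gapped h \<eta>" and "\<beta> < 4"
  shows "spectral_gap (pauli_coeff h \<beta>) < \<eta>"
  using assms pauli_decomposition[of h] unfolding gapped_def by (meson not_less)

lemma opnorm_kron_pauli_sum_le:
  fixes B :: "nat \<Rightarrow> qop"
  assumes entry_le: "\<And>\<beta> i j. \<beta> < 4 \<Longrightarrow> cmod (B \<beta> $ i $ j) \<le> e"
  shows "opnorm (\<Sum>\<beta><4. kron (B \<beta>) (pauli \<beta>)) \<le> 8 * e"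
proof -
  have "cmod ((\<Sum>\<beta><4. kron (B \<beta>) (pauli \<beta>)) $ p $ q) \<le> 2 * e" for p q
  proof -
    obtain i r j s where pq: "p = (i, r)" "q = (j, s)"
      by fastforce
    have "cmod ((\<Sum>\<beta><4. kron (B \<beta>) (pauli \<beta>)) $ p $ q)
        \<le> (\<Sum>\<beta><4. cmod (B \<beta> $ i $ j) * cmod (pauli \<beta> $ r $ s))"
      unfolding pq sum_component kron_def vec_lambda_beta fst_conv snd_conv
      by (rule norm_sum[THEN order_trans]) (simp add: norm_mult)
    also have "\<dots> \<le> (\<Sum>\<beta><4. e * cmod (pauli \<beta> $ r $ s))"
      by (intro sum_mono mult_right_mono entry_le) simp_all
    also have "\<dots> = 2 * e"
      by (simp add: sum_distrib_left[symmetric] sum_norm_pauli_entry)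
    finally show ?thesis .
  qed
  then have "opnorm (\<Sum>\<beta><4. kron (B \<beta>) (pauli \<beta>)) \<le> 2 * e * sqrt (real (CARD(2 \<times> 2) * CARD(2 \<times> 2)))"
    by (rule opnorm_le_entry_bound)
  then show ?thesis
    by simp
qed

theorem theorem4p5:
  fixes h :: qqop and \<eta> :: real
  assumes "hermitian h"
    and "\<not> gapped h \<eta>"
  shows "\<exists>g :: qop. hermitian g \<and> opnorm (h - kron (mat 1) g) \<le> 4 * \<eta>"
proof -
  define A where "A = pauli_coeff h"
  define c where "c \<beta> = Re (trace (A \<beta>)) / 2" for \<beta>
  define g :: qop where "g = (\<Sum>\<beta><4. c \<beta> *\<^sub>R pauli \<beta>)"
  have "hermitian g"
    unfolding g_def by (intro hermitian_sum hermitian_scaleR pauli_hermitian)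
  have residual: "h - kron (mat 1) g = (\<Sum>\<beta><4. kron (A \<beta> - mat (complex_of_real (c \<beta>))) (pauli \<beta>))"
    unfolding g_def kron_sum_right kron_identity_scaleR kron_diff_left sum_subtractf A_def
    by (subst pauli_decomposition[of h]) (rule refl)
  have entry_le: "cmod ((A \<beta> - mat (complex_of_real (c \<beta>))) $ i $ j) \<le> \<eta> / 2" if "\<beta> < 4" for \<beta> i j
    using norm_entry_sub_half_trace_le_half_gap[OF hermitian_pauli_coeff[OF assms(1)], of \<beta> i j]
      spectral_gap_pauli_coeff_less[OF assms(2) that]
    unfolding A_def c_def by linarith
  have "opnorm (h - kron (mat 1) g) \<le> 8 * (\<eta> / 2)"
    unfolding residual by (rule opnorm_kron_pauli_sum_le) (rule entry_le)
  then show ?thesis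
    using \<open>hermitian g\<close> by auto
qed

end
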